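(* Let $A$ be a subring of $\mathbb{R}$ and let $P_A$ be as in the context. (1) If $A$ has a unit $c\neq\pm1$, then $\infty\in P_A$. (2) If the only units of $A$ are $\pm1$, then $\infty\notin P_A$.
   Context: $PSL_2(A)$ acts on $\mathbb{R}\cup\{\infty\}$ by Möbius transformations $t\mapsto(at+b)/(ct+d)$. An element is hyperbolic if the absolute value of its trace exceeds $2$. $P_A\subseteq\mathbb{R}\cup\{\infty\}$ denotes the set of fixed points of hyperbolic elements of $PSL_2(A)$. *)

theory Defs
  imports Complex_Main
begin

text \<open>The projective line R \<union> {\<infinity>} is modelled as real option; None is \<infinity>.\<close>

definition subring_of_reals :: "real set \<Rightarrow> bool" where
  "subring_of_reals A \<longleftrightarrow> 0 \<in> A \<and> 1 \<in> A \<and>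
     (\<forall>x\<in>A. \<forall>y\<in>A. x + y \<in> A \<and> x * y \<in> A) \<and> (\<forall>x\<in>A. - x \<in> A)"

definition is_unit_in :: "real set \<Rightarrow> real \<Rightarrow> bool" where
  "is_unit_in A u \<longleftrightarrow> u \<in> A \<and> (\<exists>v\<in>A. u * v = 1)"

fun moebius :: "real \<Rightarrow> real \<Rightarrow> real \<Rightarrow> real \<Rightarrow> real option \<Rightarrow> real option" where
  "moebius a b c d (Some t) =
     (if c * t + d \<noteq> 0 then Some ((a * t + b) / (c * t + d)) else None)"
| "moebius a b c d None = (if c \<noteq> 0 then Some (a / c) else None)"

text \<open>Elements of PSL_2(A) are represented by matrices in SL_2(A) (action and |trace|
  do not depend on the sign representative).\<close>
definition hyp_fixed_points :: "real set \<Rightarrow> real option set" where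
  "hyp_fixed_points A = {t. \<exists>a\<in>A. \<exists>b\<in>A. \<exists>c\<in>A. \<exists>d\<in>A.
      a * d - b * c = 1 \<and> \<bar>a + d\<bar> > 2 \<and> moebius a b c d t = t}"

end

theory Submission
  imports Defs
begin

text \<open>A matrix fixes \<infinity> exactly when it is upper triangular, so \<infinity> is a hyperbolic fixed point
  iff A contains a, d with a d = 1 and |a + d| > 2. For a unit u the trace |u + 1/u| exceeds 2
  precisely when u \<noteq> \<plusminus>1, and diag(u, 1/u) is the required element.\<close>

lemma abs_add_inverse_gt_2:
  fixes u v :: real
  assumes "u * v = 1" "u \<noteq> 1" "u \<noteq> -1"
  shows "\<bar>u + v\<bar> > 2"
proof -
  have "u \<noteq> v"
  proof
    assume "u = v"
    then have "(u - 1) * (u + 1) = 0" using assms(1) by (simp add: algebra_simps)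
    then show False using assms(2,3) by (auto simp: add_eq_0_iff)
  qed
  then have "(u - v)^2 > 0" by simp
  then have "(u + v)^2 > 2^2"
    using assms(1) by (simp add: power2_eq_square algebra_simps)
  then show ?thesis by (metis abs_ge_zero power2_abs power_less_imp_less_base)
qed

lemma moebius_fixes_infinity_iff: "moebius a b c d None = None \<longleftrightarrow> c = 0"
  by simp

lemma infinity_in_hyp_fixed_points_if_nontrivial_unit:
  assumes "subring_of_reals A" "is_unit_in A u" "u \<noteq> 1" "u \<noteq> -1"
  shows "None \<in> hyp_fixed_points A"
proof -
  obtain v where "u \<in> A" "v \<in> A" "u * v = 1"
    using assms(2) by (auto simp: is_unit_in_def)
  moreover have "0 \<in> A" using assms(1) by (simp add: subring_of_reals_def)
  moreover have "\<bar>u + v\<bar> > 2" using abs_add_inverse_gt_2 \<open>u * v = 1\<close> assms(3,4) by blast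
  ultimately show ?thesis
    unfolding hyp_fixed_points_def
    by (intro CollectI bexI[of _ u] bexI[of _ 0] bexI[of _ v]) auto
qed

lemma infinity_notin_hyp_fixed_points_if_trivial_units:
  assumes "\<And>u. is_unit_in A u \<Longrightarrow> u = 1 \<or> u = -1"
  shows "None \<notin> hyp_fixed_points A"
proof
  assume "None \<in> hyp_fixed_points A"
  then obtain a b c d where "a \<in> A" "d \<in> A" "a * d - b * c = 1" "\<bar>a + d\<bar> > 2"
      "moebius a b c d None = None"
    unfolding hyp_fixed_points_def by blast
  then have "a * d = 1" "\<bar>a + d\<bar> > 2"
    unfolding moebius_fixes_infinity_iff by simp_all
  with \<open>a \<in> A\<close> \<open>d \<in> A\<close> have "is_unit_in A a" by (auto simp: is_unit_in_def)
  then have "a = 1 \<or> a = -1" using assms by blast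
  with \<open>a * d = 1\<close> \<open>\<bar>a + d\<bar> > 2\<close> show False by auto
qed

theorem mainTheorem11:
  fixes A :: "real set"
  assumes "subring_of_reals A"
  shows "((\<exists>u. is_unit_in A u \<and> u \<noteq> 1 \<and> u \<noteq> -1) \<longrightarrow> None \<in> hyp_fixed_points A)
    \<and> ((\<forall>u. is_unit_in A u \<longrightarrow> u = 1 \<or> u = -1) \<longrightarrow> None \<notin> hyp_fixed_points A)"
  using infinity_in_hyp_fixed_points_if_nontrivial_unit[OF assms]
    infinity_notin_hyp_fixed_points_if_trivial_units
  by blast

end
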